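(* Let $H$ be a $P$-free 3-graph on vertex set $V$ containing a copy of $C$ with vertex set $U=\{x_1,x_2,x_3,y_1,y_2,y_3\}$ and edges $\{x_i,y_j,x_k\}$ for $\{i,j,k\}=\{1,2,3\}$, and let $W=V\setminus U$. Then the set $H(U,W)$ of all edges of $H$ meeting both $U$ and $W$ is an intersecting family, i.e. every two edges of $H(U,W)$ share at least one vertex.
   Context: All hypergraphs are 3-uniform. $P$ is the loose 3-uniform path of length 3: vertices $a,b,c,d,e,f,g$, edges $\{a,b,c\},\{c,d,e\},\{e,f,g\}$; $P$-free means no sub-3-graph isomorphic to $P$. $C$ is the loose triangle (three edges pairwise meeting in exactly one vertex, with six vertices in total). *)

theory Defs
  imports Main
begin

definition three_graph :: "'a set \<Rightarrow> 'a set set \<Rightarrow> bool" where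
  "three_graph V H \<longleftrightarrow> finite V \<and> (\<forall>e\<in>H. e \<subseteq> V \<and> card e = 3)"

text \<open>P is the loose path with edges abc, cde, efg on 7 distinct vertices.
  H contains a copy of P iff there are distinct a..g with these three edges in H.\<close>
definition P_free :: "'a set set \<Rightarrow> bool" where
  "P_free H \<longleftrightarrow> \<not> (\<exists>a b c d e f g. distinct [a, b, c, d, e, f, g] \<and>
       {a, b, c} \<in> H \<and> {c, d, e} \<in> H \<and> {e, f, g} \<in> H)"

definition cross_edges :: "'a set set \<Rightarrow> 'a set \<Rightarrow> 'a set \<Rightarrow> 'a set set" where
  "cross_edges H U W = {e \<in> H. e \<inter> U \<noteq> {} \<and> e \<inter> W \<noteq> {}}"

definition intersecting :: "'a set set \<Rightarrow> bool" where
  "intersecting F \<longleftrightarrow> (\<forall>e\<in>F. \<forall>f\<in>F. e \<inter> f \<noteq> {})"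

end

theory Submission
  imports Defs
begin

text \<open>Let \<open>U\<close> be the vertex set of the loose triangle and \<open>a \<notin> U\<close> a vertex of a crossing
  edge \<open>e\<close>. Extending \<open>e\<close> through the triangle yields a loose path of length 3 unless the two
  other vertices of \<open>e\<close> form one of the pairs \<open>x\<^sub>ix\<^sub>j\<close> or \<open>x\<^sub>iy\<^sub>i\<close>. Two crossing edges with
  disjoint such traces and distinct outer vertices again close up a loose path: \<open>a x\<^sub>1 x\<^sub>2, x\<^sub>2 y\<^sub>1 x\<^sub>3, x\<^sub>3 y\<^sub>3 d\<close> or
  \<open>a y\<^sub>1 x\<^sub>1, x\<^sub>1 y\<^sub>3 x\<^sub>2, x\<^sub>2 y\<^sub>2 d\<close> up to symmetry.\<close>

definition loose_triangle :: "'a set set \<Rightarrow> 'a \<Rightarrow> 'a \<Rightarrow> 'a \<Rightarrow> 'a \<Rightarrow> 'a \<Rightarrow> 'a \<Rightarrow> bool" where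
  "loose_triangle H x1 x2 x3 y1 y2 y3 \<longleftrightarrow> distinct [x1, x2, x3, y1, y2, y3] \<and>
     {x1, y3, x2} \<in> H \<and> {x1, y2, x3} \<in> H \<and> {x2, y1, x3} \<in> H"

definition crossing_traces :: "'a \<Rightarrow> 'a \<Rightarrow> 'a \<Rightarrow> 'a \<Rightarrow> 'a \<Rightarrow> 'a \<Rightarrow> 'a set set" where
  "crossing_traces x1 x2 x3 y1 y2 y3 = {{x1, x2}, {x1, x3}, {x2, x3}, {x1, y1}, {x2, y2}, {x3, y3}}"

lemma loose_triangle_swap12:
  "loose_triangle H x1 x2 x3 y1 y2 y3 \<Longrightarrow> loose_triangle H x2 x1 x3 y2 y1 y3"
  unfolding loose_triangle_def by (auto simp: insert_commute)

lemma loose_triangle_swap13: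
  "loose_triangle H x1 x2 x3 y1 y2 y3 \<Longrightarrow> loose_triangle H x3 x2 x1 y3 y2 y1"
  unfolding loose_triangle_def by (auto simp: insert_commute)

lemma loose_triangle_swap23:
  "loose_triangle H x1 x2 x3 y1 y2 y3 \<Longrightarrow> loose_triangle H x1 x3 x2 y1 y3 y2"
  unfolding loose_triangle_def by (auto simp: insert_commute)

lemma P_freeD:
  assumes "P_free H" "distinct [a, b, c, d, e, f, g]"
    and "{a, b, c} \<in> H" "{c, d, e} \<in> H" "{e, f, g} \<in> H"
  shows False
  using assms unfolding P_free_def by blast

lemma crossing_edge_at_x1:
  assumes P: "P_free H" and "loose_triangle H x1 x2 x3 y1 y2 y3"
    and "{a, q, x1} \<in> H" "a \<notin> {x1, x2, x3, y1, y2, y3}" "a \<noteq> q" "q \<noteq> x1"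
  shows "q \<in> {x2, x3, y1}"
proof (rule ccontr)
  assume q: "q \<notin> {x2, x3, y1}"
  \<comment> \<open>continue around the triangle in the direction that avoids \<open>q\<close>\<close>
  show False
  proof (cases "q = y3")
    case True
    show False
      by (rule P_freeD[OF P, of a y3 x1 y2 x3 y1 x2])
        (use assms True in \<open>auto simp: loose_triangle_def insert_commute\<close>)
  next
    case False
    show False
      by (rule P_freeD[OF P, of a q x1 y3 x2 y1 x3])
        (use assms q False in \<open>auto simp: loose_triangle_def insert_commute\<close>)
  qed
qed

lemma crossing_edge_at_y1:
  assumes P: "P_free H" and "loose_triangle H x1 x2 x3 y1 y2 y3"
    and "{a, q, y1} \<in> H" "a \<notin> {x1, x2, x3, y1, y2, y3}" "a \<noteq> q" "q \<noteq> y1"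
  shows "q \<in> {x1, x2, x3}"
proof (rule ccontr)
  assume q: "q \<notin> {x1, x2, x3}"
  show False
  proof (cases "q = y3")
    case True
    show False
      by (rule P_freeD[OF P, of a y3 y1 x2 x3 x1 y2])
        (use assms True in \<open>auto simp: loose_triangle_def insert_commute\<close>)
  next
    case False
    show False
      by (rule P_freeD[OF P, of a q y1 x3 x2 x1 y3])
        (use assms q False in \<open>auto simp: loose_triangle_def insert_commute\<close>)
  qed
qed

lemma crossing_edge_through_triangle:
  assumes P: "P_free H" and t: "loose_triangle H x1 x2 x3 y1 y2 y3"
    and "{a, q, r} \<in> H" and a: "a \<notin> {x1, x2, x3, y1, y2, y3}" and "a \<noteq> q" "q \<noteq> r"
    and r: "r \<in> {x1, x2, x3, y1, y2, y3}"
  shows "q \<in> {x1, x2, x3} \<or> {q, r} \<in> {{x1, y1}, {x2, y2}, {x3, y3}}"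
proof -
  note t2 = loose_triangle_swap12[OF t] and t3 = loose_triangle_swap13[OF t]
  have a': "a \<notin> {x2, x1, x3, y2, y1, y3}" "a \<notin> {x3, x2, x1, y3, y2, y1}"
    using a by auto
  from r consider "r = x1" | "r = x2" | "r = x3" | "r = y1" | "r = y2" | "r = y3"
    by blast
  then show ?thesis
  proof cases
    case 1
    then show ?thesis using crossing_edge_at_x1[OF P t _ a, of q] assms by auto
  next
    case 2
    then show ?thesis using crossing_edge_at_x1[OF P t2 _ a'(1), of q] assms by auto
  next
    case 3
    then show ?thesis using crossing_edge_at_x1[OF P t3 _ a'(2), of q] assms by auto
  next
    case 4
    then show ?thesis using crossing_edge_at_y1[OF P t _ a, of q] assms by auto
  next
    case 5
    then show ?thesis using crossing_edge_at_y1[OF P t2 _ a'(1), of q] assms by auto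
  next
    case 6
    then show ?thesis using crossing_edge_at_y1[OF P t3 _ a'(2), of q] assms by auto
  qed
qed

lemma crossing_traces_xx:
  assumes "b \<in> {x1, x2, x3}" "c \<in> {x1, x2, x3}" "b \<noteq> c"
  shows "{b, c} \<in> crossing_traces x1 x2 x3 y1 y2 y3"
  using assms unfolding crossing_traces_def
  by (simp only: insert_iff empty_iff) (elim disjE; simp add: insert_commute)

lemma crossing_traces_xy:
  "{b, c} \<in> {{x1, y1}, {x2, y2}, {x3, y3}} \<Longrightarrow> {b, c} \<in> crossing_traces x1 x2 x3 y1 y2 y3"
  unfolding crossing_traces_def by blast

lemma crossing_edge_trace:
  assumes P: "P_free H" and t: "loose_triangle H x1 x2 x3 y1 y2 y3"
    and e: "{a, b, c} \<in> H" and a: "a \<notin> {x1, x2, x3, y1, y2, y3}" and abc: "distinct [a, b, c]"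
    and c: "c \<in> {x1, x2, x3, y1, y2, y3}"
  shows "{b, c} \<in> crossing_traces x1 x2 x3 y1 y2 y3"
proof -
  have ne: "a \<noteq> b" "b \<noteq> c" "a \<noteq> c" "c \<noteq> b"
    using abc by auto
  have "b \<in> {x1, x2, x3} \<or> {b, c} \<in> {{x1, y1}, {x2, y2}, {x3, y3}}"
    by (rule crossing_edge_through_triangle[OF P t e a ne(1,2) c])
  then show ?thesis
  proof
    assume b: "b \<in> {x1, x2, x3}"
    then have bU: "b \<in> {x1, x2, x3, y1, y2, y3}"
      by blast
    have e': "{a, c, b} \<in> H"
      using e by (simp add: insert_commute)
    have "c \<in> {x1, x2, x3} \<or> {c, b} \<in> {{x1, y1}, {x2, y2}, {x3, y3}}"
      by (rule crossing_edge_through_triangle[OF P t e' a ne(3,4) bU])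
    then show ?thesis
    proof
      assume "c \<in> {x1, x2, x3}"
      then show ?thesis by (rule crossing_traces_xx[OF b _ ne(2)])
    next
      assume "{c, b} \<in> {{x1, y1}, {x2, y2}, {x3, y3}}"
      then show ?thesis by (simp add: insert_commute crossing_traces_xy)
    qed
  qed (rule crossing_traces_xy)
qed

lemma no_disjoint_crossing_edges_xx_xy:
  assumes P: "P_free H" and "loose_triangle H x1 x2 x3 y1 y2 y3"
    and "{a, x1, x2} \<in> H" "{d, x3, y3} \<in> H"
    and "a \<notin> {x1, x2, x3, y1, y2, y3}" "d \<notin> {x1, x2, x3, y1, y2, y3}" "a \<noteq> d"
  shows False
  by (rule P_freeD[OF P, of a x1 x2 y1 x3 y3 d])
    (use assms in \<open>auto simp: loose_triangle_def insert_commute\<close>)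

lemma no_disjoint_crossing_edges_xy_xy:
  assumes P: "P_free H" and "loose_triangle H x1 x2 x3 y1 y2 y3"
    and "{a, x1, y1} \<in> H" "{d, x2, y2} \<in> H"
    and "a \<notin> {x1, x2, x3, y1, y2, y3}" "d \<notin> {x1, x2, x3, y1, y2, y3}" "a \<noteq> d"
  shows False
  by (rule P_freeD[OF P, of a y1 x1 y3 x2 y2 d])
    (use assms in \<open>auto simp: loose_triangle_def insert_commute\<close>)

lemma no_disjoint_crossing_traces:
  assumes P: "P_free H" and t: "loose_triangle H x1 x2 x3 y1 y2 y3"
    and S: "S \<in> crossing_traces x1 x2 x3 y1 y2 y3" and T: "T \<in> crossing_traces x1 x2 x3 y1 y2 y3"
    and eS: "insert a S \<in> H" and eT: "insert d T \<in> H"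
    and a: "a \<notin> {x1, x2, x3, y1, y2, y3}" and d: "d \<notin> {x1, x2, x3, y1, y2, y3}" and "a \<noteq> d"
    and "S \<inter> T = {}"
  shows False
proof -
  note t13 = loose_triangle_swap13[OF t] and t23 = loose_triangle_swap23[OF t]
  have dist: "distinct [x1, x2, x3, y1, y2, y3]"
    using t unfolding loose_triangle_def by simp
  have a': "a \<notin> {x3, x2, x1, y3, y2, y1}" "a \<notin> {x1, x3, x2, y1, y3, y2}"
    and d': "d \<notin> {x3, x2, x1, y3, y2, y1}" "d \<notin> {x1, x3, x2, y1, y3, y2}"
    using a d by auto
  have "d \<noteq> a"
    using \<open>a \<noteq> d\<close> by simp
  \<comment> \<open>each of the six disjoint pairs of traces, in either order\<close>
  note impossible =
    no_disjoint_crossing_edges_xx_xy[OF P t _ _ a d \<open>a \<noteq> d\<close>]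
    no_disjoint_crossing_edges_xx_xy[OF P t _ _ d a \<open>d \<noteq> a\<close>]
    no_disjoint_crossing_edges_xx_xy[OF P t13 _ _ a'(1) d'(1) \<open>a \<noteq> d\<close>]
    no_disjoint_crossing_edges_xx_xy[OF P t13 _ _ d'(1) a'(1) \<open>d \<noteq> a\<close>]
    no_disjoint_crossing_edges_xx_xy[OF P t23 _ _ a'(2) d'(2) \<open>a \<noteq> d\<close>]
    no_disjoint_crossing_edges_xx_xy[OF P t23 _ _ d'(2) a'(2) \<open>d \<noteq> a\<close>]
    no_disjoint_crossing_edges_xy_xy[OF P t _ _ a d \<open>a \<noteq> d\<close>]
    no_disjoint_crossing_edges_xy_xy[OF P t _ _ d a \<open>d \<noteq> a\<close>]
    no_disjoint_crossing_edges_xy_xy[OF P t13 _ _ a'(1) d'(1) \<open>a \<noteq> d\<close>]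
    no_disjoint_crossing_edges_xy_xy[OF P t13 _ _ d'(1) a'(1) \<open>d \<noteq> a\<close>]
    no_disjoint_crossing_edges_xy_xy[OF P t23 _ _ a'(2) d'(2) \<open>a \<noteq> d\<close>]
    no_disjoint_crossing_edges_xy_xy[OF P t23 _ _ d'(2) a'(2) \<open>d \<noteq> a\<close>]
  from S T show False
    unfolding crossing_traces_def
    apply (simp only: insert_iff empty_iff)
    apply (elim disjE)
    using eS eT \<open>S \<inter> T = {}\<close> dist impossible by (simp_all add: insert_commute)
qed

lemma card_3_elem_pairE:
  assumes "card e = 3" "a \<in> e" "c \<in> e" "a \<noteq> c"
  obtains b where "e = {a, b, c}" "distinct [a, b, c]"
proof -
  have "card (e - {a, c}) = 1"
    using assms by (simp add: card_Diff_subset)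
  then obtain b where "e - {a, c} = {b}"
    by (rule card_1_singletonE)
  then have "e = {a, b, c}" "distinct [a, b, c]"
    using assms(2-4) by auto
  then show thesis by (rule that)
qed

lemma crossing_edgeE:
  assumes G: "three_graph V H" and P: "P_free H" and t: "loose_triangle H x1 x2 x3 y1 y2 y3"
    and e: "e \<in> cross_edges H {x1, x2, x3, y1, y2, y3} (V - {x1, x2, x3, y1, y2, y3})"
  obtains a S where "a \<notin> {x1, x2, x3, y1, y2, y3}" "e = insert a S"
    "S \<in> crossing_traces x1 x2 x3 y1 y2 y3"
proof -
  from e obtain a c where eH: "e \<in> H" and "a \<in> e" and a: "a \<notin> {x1, x2, x3, y1, y2, y3}"
    and "c \<in> e" and c: "c \<in> {x1, x2, x3, y1, y2, y3}"
    unfolding cross_edges_def by blast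
  moreover have "card e = 3"
    using G eH unfolding three_graph_def by blast
  ultimately obtain b where "e = {a, b, c}" "distinct [a, b, c]"
    using card_3_elem_pairE by metis
  with crossing_edge_trace[OF P t _ a _ c] show thesis
    using that[OF a] eH by blast
qed

theorem mainTheorem8:
  fixes V :: "'a set" and H :: "'a set set" and x1 x2 x3 y1 y2 y3 :: 'a
  assumes "three_graph V H"
    and "P_free H"
    and "distinct [x1, x2, x3, y1, y2, y3]"
    and "{x1, x2, x3, y1, y2, y3} \<subseteq> V"
    and "{x1, y3, x2} \<in> H" and "{x1, y2, x3} \<in> H" and "{x2, y1, x3} \<in> H"
  shows "intersecting (cross_edges H {x1, x2, x3, y1, y2, y3} (V - {x1, x2, x3, y1, y2, y3}))"
  unfolding intersecting_def
proof (intro ballI notI)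
  have t: "loose_triangle H x1 x2 x3 y1 y2 y3"
    using assms unfolding loose_triangle_def by simp
  fix e f
  assume "e \<in> cross_edges H {x1, x2, x3, y1, y2, y3} (V - {x1, x2, x3, y1, y2, y3})"
    and "f \<in> cross_edges H {x1, x2, x3, y1, y2, y3} (V - {x1, x2, x3, y1, y2, y3})"
    and disjoint: "e \<inter> f = {}"
  moreover note crossing_edgeE[OF assms(1,2) t]
  ultimately obtain a S d T where
    "a \<notin> {x1, x2, x3, y1, y2, y3}" "e = insert a S" "S \<in> crossing_traces x1 x2 x3 y1 y2 y3"
    "d \<notin> {x1, x2, x3, y1, y2, y3}" "f = insert d T" "T \<in> crossing_traces x1 x2 x3 y1 y2 y3"
    by metis
  moreover have "e \<in> H" "f \<in> H"
    using \<open>e \<in> _\<close> \<open>f \<in> _\<close> unfolding cross_edges_def by auto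
  ultimately show False
    using no_disjoint_crossing_traces[OF assms(2) t] disjoint by blast
qed

end
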